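(* Let $n\ge 1$ and let $f_1,\dots,f_n\in\mathcal{B}_c$. Let $X=(X_1,\dots,X_n)$ be a random vector in $\mathbb{R}^n$ (the $X_i$ possibly dependent) such that $P(|X_i|\ge u)\le f_i(u)$ for all $u\ge 0$ and all $i$. Let $g:\mathbb{R}^n\to\mathbb{R}$ be continuous, even in each coordinate, and such that for each $i$ and each fixed choice of the other $n-1$ coordinates, $g$ is strictly increasing in the $i$-th coordinate on $[0,\infty)$. Define $h(s)=g\big(f_1^{-1}(s),\dots,f_n^{-1}(s)\big)$ for $s\in(0,1]$, and suppose $\lim_{s\downarrow 0}h(s)=\infty$. Then for all $t\ge h(1)$, $$P(g(X)\ge t)\le n\,h^{-1}(t).$$ Furthermore, if $f_1(0)=\cdots=f_n(0)=:c$, then with $h$ defined by the same formula on $(0,c]$, the inequality $P(g(X)\ge t)\le n\,h^{-1}(t)$ holds for all $t\ge g(\mathbf{0})$.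
   Context: $\mathcal{B}_c$ is the set of functions $f:[0,\infty)\to(0,\infty)$ that are continuous, strictly decreasing, satisfy $f(0)\ge 1$ and $\lim_{u\to\infty}f(u)=0$; $f_i^{-1}$ denotes the inverse function of $f_i$ (defined on $(0,f_i(0)]$). Under the hypotheses, $h$ is continuous and strictly decreasing, so $h^{-1}(t)$ is the unique $s$ with $h(s)=t$. *)

theory Defs
  imports "HOL-Probability.Probability"
begin

definition Bc :: "(real \<Rightarrow> real) \<Rightarrow> bool" where
  "Bc f \<longleftrightarrow> continuous_on {0..} f \<and> strict_antimono_on {0..} f
     \<and> (\<forall>u\<ge>0. f u > 0) \<and> f 0 \<ge> 1 \<and> (f \<longlongrightarrow> 0) at_top"

definition finv :: "(real \<Rightarrow> real) \<Rightarrow> real \<Rightarrow> real" where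
  "finv f s = (THE u. u \<ge> 0 \<and> f u = s)"

end

theory Submission
  imports Defs
begin

text \<open>If \<open>g(X) \<ge> g(u)\<close> with \<open>u\<^sub>i = f\<^sub>i\<^sup>-\<^sup>1(s)\<close>, then, since \<open>g(X) = g(|X\<^sub>1|, \<dots>, |X\<^sub>n|)\<close> and
  \<open>g\<close> is strictly increasing in each coordinate on \<open>[0, \<infinity>)\<close>, some \<open>|X\<^sub>i| \<ge> u\<^sub>i\<close>, an event of
  probability at most \<open>f\<^sub>i(u\<^sub>i) = s\<close>; the union bound gives \<open>P(g(X) \<ge> h(s)) \<le> n s\<close>.
  The function \<open>h\<close> is continuous and strictly decreasing with \<open>h(0+) = \<infinity>\<close>, so every
  \<open>t \<ge> h(m)\<close> equals \<open>h(s)\<close> for exactly one \<open>s \<in> (0, m]\<close>. Take \<open>m = 1\<close>, or \<open>m = c\<close> when all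
  \<open>f\<^sub>i(0) = c\<close>, in which case \<open>h(c) = g(0)\<close>.\<close>

lemma Bc_less_iff:
  assumes "Bc f" "0 \<le> x" "0 \<le> y"
  shows "f x < f y \<longleftrightarrow> y < x"
  using assms unfolding Bc_def monotone_on_def
  by (cases x y rule: linorder_cases) (auto, fastforce)

lemma Bc_inj:
  assumes "Bc f" "0 \<le> x" "0 \<le> y" "f x = f y"
  shows "x = y"
  using Bc_less_iff[OF assms(1,2,3)] Bc_less_iff[OF assms(1,3,2)] assms(4)
  by (metis less_irrefl neq_iff)

lemma Bc_ex_less:
  assumes "Bc f" "0 < a"
  obtains U where "0 \<le> U" "f U < a"
proof -
  have "(f \<longlongrightarrow> 0) at_top"
    using assms(1) by (simp add: Bc_def)
  then have "\<forall>\<^sub>F u in at_top. f u < a"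
    using assms(2) by (rule order_tendstoD(2))
  then obtain N where "\<forall>u\<ge>N. f u < a"
    by (auto simp: eventually_at_top_linorder)
  then show ?thesis
    using that[of "max N 0"] by auto
qed

lemma Bc_IVT:
  assumes "Bc f" "0 \<le> U" "f U \<le> s" "s \<le> f 0"
  shows "\<exists>u. 0 \<le> u \<and> u \<le> U \<and> f u = s"
proof -
  have "continuous_on {0..U} f"
    using assms(1) unfolding Bc_def by (auto intro: continuous_on_subset)
  then show ?thesis
    using IVT2'[of f U s 0] assms(2-4) by auto
qed

lemma finv_f:
  assumes "Bc f" "0 \<le> u"
  shows "finv f (f u) = u"
  unfolding finv_def by (rule the_equality) (use assms Bc_inj in auto)

lemma
  assumes "Bc f" "0 < s" "s \<le> f 0"
  shows finv_nonneg: "0 \<le> finv f s"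
    and f_finv: "f (finv f s) = s"
proof -
  obtain U where "0 \<le> U" "f U < s"
    using Bc_ex_less[OF assms(1,2)] .
  then obtain u where "0 \<le> u" "f u = s"
    using Bc_IVT[OF assms(1), of U s] assms(3) by auto
  with finv_f[OF assms(1)] show "0 \<le> finv f s" "f (finv f s) = s"
    by auto
qed

lemma finv_strict_antimono:
  assumes "Bc f" "0 < s\<^sub>1" "s\<^sub>1 < s\<^sub>2" "s\<^sub>2 \<le> f 0"
  shows "finv f s\<^sub>2 < finv f s\<^sub>1"
  using Bc_less_iff[OF assms(1) finv_nonneg[OF assms(1)] finv_nonneg[OF assms(1)],
      of s\<^sub>1 s\<^sub>2] f_finv[OF assms(1)] assms
  by auto

lemma continuous_on_finv:
  assumes "Bc f" "0 < a"
  shows "continuous_on {a..f 0} (finv f)"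
proof -
  obtain U where U: "0 \<le> U" "f U < a"
    using Bc_ex_less[OF assms] .
  have "continuous_on {0..U} f"
    using assms(1) unfolding Bc_def by (auto intro: continuous_on_subset)
  then have "continuous_on (f ` {0..U}) (finv f)"
    by (rule continuous_on_inv) (auto simp: finv_f[OF assms(1)])
  moreover have "{a..f 0} \<subseteq> f ` {0..U}"
  proof
    fix s assume "s \<in> {a..f 0}"
    then obtain u where "0 \<le> u" "u \<le> U" "f u = s"
      using Bc_IVT[OF assms(1) U(1), of s] U(2) by auto
    then show "s \<in> f ` {0..U}"
      by auto
  qed
  ultimately show ?thesis
    by (rule continuous_on_subset)
qed

lemma coordinatewise_strict_mono_less:
  fixes g :: "real ^ 'n \<Rightarrow> 'b :: order"
  assumes mono: "\<And>x i a b. 0 \<le> a \<Longrightarrow> a < b \<Longrightarrow>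
           g (\<chi> j. if j = i then a else x $ j) < g (\<chi> j. if j = i then b else x $ j)"
    and "\<And>i. 0 \<le> x $ i" "\<And>i. x $ i < y $ i"
  shows "g x < g y"
proof -
  define z where "z S = (\<chi> j. if j \<in> S then y $ j else x $ j)" for S
  have step: "g (z S) < g (z (insert i S))" if "i \<notin> S" for i S
  proof -
    have "g (\<chi> j. if j = i then x $ i else z S $ j) < g (\<chi> j. if j = i then y $ i else z S $ j)"
      by (rule mono) (use assms(2,3) in auto)
    moreover have "(\<chi> j. if j = i then x $ i else z S $ j) = z S"
      and "(\<chi> j. if j = i then y $ i else z S $ j) = z (insert i S)"
      using that by (auto simp: vec_eq_iff z_def)
    ultimately show ?thesis
      by simp
  qed
  have le: "g x \<le> g (z S)" if "finite S" for S
    using that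
  proof (induction S rule: finite_induct)
    case empty
    then show ?case by (simp add: z_def)
  next
    case (insert i S)
    then show ?case using step[of i S] by (auto intro: order.trans less_imp_le)
  qed
  fix i :: 'n
  have "g x \<le> g (z (- {i}))"
    by (rule le) simp
  also have "\<dots> < g (z (insert i (- {i})))"
    by (rule step) simp
  also have "z (insert i (- {i})) = y"
    by (simp add: z_def vec_eq_iff)
  finally show ?thesis .
qed

lemma coordinatewise_even_abs:
  fixes g :: "real ^ 'n \<Rightarrow> 'b"
  assumes even: "\<And>x i. g (\<chi> j. if j = i then - (x $ i) else x $ j) = g x"
  shows "g (\<chi> j. \<bar>x $ j\<bar>) = g x"
proof -
  define z where "z S = (\<chi> j. if j \<in> S then \<bar>x $ j\<bar> else x $ j)" for S
  have step: "g (z (insert i S)) = g (z S)" if "i \<notin> S" for i S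
  proof (cases "x $ i < 0")
    case True
    then have "(\<chi> j. if j = i then - (z S $ i) else z S $ j) = z (insert i S)"
      using that by (auto simp: vec_eq_iff z_def)
    then show ?thesis
      using even[of i "z S"] by simp
  next
    case False
    then have "z (insert i S) = z S"
      using that by (auto simp: vec_eq_iff z_def)
    then show ?thesis
      by simp
  qed
  have "g (z S) = g x" if "finite S" for S
    using that
  proof (induction S rule: finite_induct)
    case empty
    then show ?case by (simp add: z_def)
  next
    case (insert i S)
    then show ?case using step[of i S] by simp
  qed
  from this[of UNIV] show ?thesis
    by (simp add: z_def)
qed

lemma measure_g_ge_le_sum_tails:
  fixes X :: "'a \<Rightarrow> real ^ 'n" and g :: "real ^ 'n \<Rightarrow> real"
  assumes "finite_measure M" "X \<in> borel_measurable M"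
    and even: "\<And>x i. g (\<chi> j. if j = i then - (x $ i) else x $ j) = g x"
    and mono: "\<And>x i a b. 0 \<le> a \<Longrightarrow> a < b \<Longrightarrow>
           g (\<chi> j. if j = i then a else x $ j) < g (\<chi> j. if j = i then b else x $ j)"
    and "\<And>i. 0 \<le> u $ i"
  shows "measure M {\<omega> \<in> space M. g u \<le> g (X \<omega>)}
           \<le> (\<Sum>i\<in>UNIV. measure M {\<omega> \<in> space M. u $ i \<le> \<bar>X \<omega> $ i\<bar>})"
proof -
  interpret finite_measure M by (rule assms(1))
  define A where "A i = {\<omega> \<in> space M. u $ i \<le> \<bar>X \<omega> $ i\<bar>}" for i
  have "(\<lambda>\<omega>. X \<omega> $ i) \<in> borel_measurable M" for i
    by (rule measurable_compose[OF assms(2) borel_measurable_continuous_onI])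
      (intro continuous_intros)
  then have A_sets: "A i \<in> sets M" for i
    unfolding A_def by measurable
  have "{\<omega> \<in> space M. g u \<le> g (X \<omega>)} \<subseteq> (\<Union>i. A i)"
  proof (rule subsetI, rule ccontr)
    fix \<omega> assume \<omega>: "\<omega> \<in> {\<omega> \<in> space M. g u \<le> g (X \<omega>)}" and "\<omega> \<notin> (\<Union>i. A i)"
    then have "\<bar>X \<omega> $ i\<bar> < u $ i" for i
      by (auto simp: A_def not_le)
    then have "g (\<chi> j. \<bar>X \<omega> $ j\<bar>) < g u"
      by (intro coordinatewise_strict_mono_less[where g = g, OF mono]) auto
    with \<omega> show False
      using coordinatewise_even_abs[where g = g, OF even, of "X \<omega>"] by simp
  qed
  then have "measure M {\<omega> \<in> space M. g u \<le> g (X \<omega>)} \<le> measure M (\<Union>i. A i)"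
    using A_sets by (intro finite_measure_mono) auto
  also have "\<dots> \<le> (\<Sum>i\<in>UNIV. measure M (A i))"
    using A_sets by (intro finite_measure_subadditive_finite) auto
  finally show ?thesis
    by (simp add: A_def)
qed

lemma ex1_level_strict_antimono_at_right_0:
  fixes h :: "real \<Rightarrow> real"
  assumes dec: "\<And>s\<^sub>1 s\<^sub>2. 0 < s\<^sub>1 \<Longrightarrow> s\<^sub>1 < s\<^sub>2 \<Longrightarrow> s\<^sub>2 \<le> m \<Longrightarrow> h s\<^sub>2 < h s\<^sub>1"
    and cont: "\<And>a. 0 < a \<Longrightarrow> continuous_on {a..m} h"
    and lim: "filterlim h at_top (at_right 0)"
    and "0 < m" "h m \<le> t"
  shows "\<exists>!s. 0 < s \<and> s \<le> m \<and> h s = t"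
proof (rule ex_ex1I)
  have "\<forall>\<^sub>F s in at_right 0. t \<le> h s"
    using lim by (simp add: filterlim_at_top)
  then obtain b where "0 < b" "\<And>s. 0 < s \<Longrightarrow> s < b \<Longrightarrow> t \<le> h s"
    by (auto simp: eventually_at_right_field)
  then have a: "0 < min (b/2) m" "min (b/2) m \<le> m" "t \<le> h (min (b/2) m)"
    using \<open>0 < m\<close> by auto
  then obtain s where "min (b/2) m \<le> s" "s \<le> m" "h s = t"
    using IVT2'[of h m t "min (b/2) m"] cont[OF a(1)] \<open>h m \<le> t\<close> by blast
  with a show "\<exists>s. 0 < s \<and> s \<le> m \<and> h s = t"
    by (intro exI[of _ s]) auto
next
  fix s s' assume "0 < s \<and> s \<le> m \<and> h s = t" "0 < s' \<and> s' \<le> m \<and> h s' = t"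
  then show "s = s'"
    using dec[of s s'] dec[of s' s] by (cases s s' rule: linorder_cases) auto
qed

lemma strict_antimono_g_finv:
  fixes g :: "real ^ 'n \<Rightarrow> real"
  assumes "\<And>i. Bc (f i)" "\<And>i. m \<le> f i 0"
    and mono: "\<And>x i a b. 0 \<le> a \<Longrightarrow> a < b \<Longrightarrow>
           g (\<chi> j. if j = i then a else x $ j) < g (\<chi> j. if j = i then b else x $ j)"
    and "0 < s\<^sub>1" "s\<^sub>1 < s\<^sub>2" "s\<^sub>2 \<le> m"
  shows "g (\<chi> i. finv (f i) s\<^sub>2) < g (\<chi> i. finv (f i) s\<^sub>1)"
proof (rule coordinatewise_strict_mono_less[where g = g, OF mono])
  fix i
  have "s\<^sub>2 \<le> f i 0"
    using assms(2)[of i] \<open>s\<^sub>2 \<le> m\<close> by linarith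
  then show "0 \<le> (\<chi> i. finv (f i) s\<^sub>2) $ i" "(\<chi> i. finv (f i) s\<^sub>2) $ i < (\<chi> i. finv (f i) s\<^sub>1) $ i"
    using finv_nonneg[OF assms(1)] finv_strict_antimono[OF assms(1)] assms(4,5) by auto
qed

lemma continuous_on_g_finv:
  fixes g :: "real ^ 'n \<Rightarrow> real"
  assumes "\<And>i. Bc (f i)" "\<And>i. m \<le> f i 0" "continuous_on UNIV g" "0 < a"
  shows "continuous_on {a..m} (\<lambda>s. g (\<chi> i. finv (f i) s))"
proof (rule continuous_on_compose2[OF assms(3)])
  show "continuous_on {a..m} (\<lambda>s. \<chi> i. finv (f i) s)"
  proof (rule continuous_on_vec_lambda)
    fix i
    show "continuous_on {a..m} (finv (f i))"
      by (rule continuous_on_subset[OF continuous_on_finv[OF assms(1)[of i] assms(4)]])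
        (use assms(2)[of i] in auto)
  qed
qed auto

lemma measure_g_ge_level_le:
  fixes M :: "'a measure"
    and X :: "'a \<Rightarrow> real ^ 'n"
    and f :: "'n \<Rightarrow> real \<Rightarrow> real"
    and g :: "real ^ 'n \<Rightarrow> real"
    and h :: "real \<Rightarrow> real"
  assumes "prob_space M"
    and "X \<in> borel_measurable M"
    and Bc: "\<And>i. Bc (f i)"
    and tail: "\<And>i u. u \<ge> 0 \<Longrightarrow>
           measure M {\<omega> \<in> space M. \<bar>X \<omega> $ i\<bar> \<ge> u} \<le> f i u"
    and "continuous_on UNIV g"
    and even: "\<And>x i. g (\<chi> j. if j = i then - (x $ i) else x $ j) = g x"
    and mono: "\<And>x i a b. 0 \<le> a \<Longrightarrow> a < b \<Longrightarrow>
           g (\<chi> j. if j = i then a else x $ j) < g (\<chi> j. if j = i then b else x $ j)"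
    and h_def: "\<And>s. h s = g (\<chi> i. finv (f i) s)"
    and "filterlim h at_top (at_right 0)"
    and m: "0 < m" "\<And>i. m \<le> f i 0"
    and "h m \<le> t"
  shows "measure M {\<omega> \<in> space M. g (X \<omega>) \<ge> t}
           \<le> real CARD('n) * (THE s. 0 < s \<and> s \<le> m \<and> h s = t)"
proof -
  have level: "\<exists>!s. 0 < s \<and> s \<le> m \<and> h s = t"
  proof (rule ex1_level_strict_antimono_at_right_0)
    show "h s\<^sub>2 < h s\<^sub>1" if "0 < s\<^sub>1" "s\<^sub>1 < s\<^sub>2" "s\<^sub>2 \<le> m" for s\<^sub>1 s\<^sub>2
      unfolding h_def using strict_antimono_g_finv[where g = g, OF Bc m(2) mono that] .
    have "h = (\<lambda>s. g (\<chi> i. finv (f i) s))"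
      using h_def by blast
    then show "continuous_on {a..m} h" if "0 < a" for a
      using continuous_on_g_finv[OF Bc m(2) assms(5) that] by simp
  qed fact+
  define s where "s = (THE s. 0 < s \<and> s \<le> m \<and> h s = t)"
  have s: "0 < s" "s \<le> m" "h s = t"
    using theI'[OF level] unfolding s_def by auto
  define u where "u = (\<chi> i. finv (f i) s)"
  have s_le: "s \<le> f i 0" for i
    using m(2)[of i] s(2) by linarith
  then have u_nonneg: "0 \<le> u $ i" and f_u: "f i (u $ i) = s" for i
    unfolding u_def using finv_nonneg[OF Bc s(1)] f_finv[OF Bc s(1)] by auto
  have "measure M {\<omega> \<in> space M. g u \<le> g (X \<omega>)}
          \<le> (\<Sum>i\<in>UNIV. measure M {\<omega> \<in> space M. u $ i \<le> \<bar>X \<omega> $ i\<bar>})"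
    using measure_g_ge_le_sum_tails[where g = g, OF prob_space.finite_measure[OF \<open>prob_space M\<close>]
        assms(2) even mono u_nonneg] .
  also have "\<dots> \<le> (\<Sum>i\<in>(UNIV :: 'n set). s)"
  proof (rule sum_mono)
    fix i
    show "measure M {\<omega> \<in> space M. u $ i \<le> \<bar>X \<omega> $ i\<bar>} \<le> s"
      using tail[OF u_nonneg[of i], of i] f_u[of i] by simp
  qed
  also have "\<dots> = real CARD('n) * s"
    by simp
  finally have "measure M {\<omega> \<in> space M. g u \<le> g (X \<omega>)} \<le> real CARD('n) * s" .
  moreover have "g u = t"
    using s(3) by (simp add: h_def u_def)
  ultimately show ?thesis
    by (simp add: s_def)
qed

theorem theorem2:
  fixes M :: "'a measure"
    and X :: "'a \<Rightarrow> real ^ 'n"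
    and f :: "'n \<Rightarrow> real \<Rightarrow> real"
    and g :: "real ^ 'n \<Rightarrow> real"
    and h :: "real \<Rightarrow> real"
  assumes "prob_space M"
    and "X \<in> borel_measurable M"
    and "\<And>i. Bc (f i)"
    and "\<And>i u. u \<ge> 0 \<Longrightarrow>
           measure M {\<omega> \<in> space M. \<bar>X \<omega> $ i\<bar> \<ge> u} \<le> f i u"
    and "continuous_on UNIV g"
    and "\<And>x i. g (\<chi> j. if j = i then - (x $ i) else x $ j) = g x"
    and "\<And>x i a b. 0 \<le> a \<Longrightarrow> a < b \<Longrightarrow>
           g (\<chi> j. if j = i then a else x $ j) < g (\<chi> j. if j = i then b else x $ j)"
    and h_def: "\<And>s. h s = g (\<chi> i. finv (f i) s)"
    and "filterlim h at_top (at_right 0)"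
  shows "(\<forall>t \<ge> h 1. measure M {\<omega> \<in> space M. g (X \<omega>) \<ge> t}
             \<le> real CARD('n) * (THE s. 0 < s \<and> s \<le> 1 \<and> h s = t))
       \<and> (\<forall>c. (\<forall>i. f i 0 = c) \<longrightarrow>
            (\<forall>t \<ge> g 0. measure M {\<omega> \<in> space M. g (X \<omega>) \<ge> t}
               \<le> real CARD('n) * (THE s. 0 < s \<and> s \<le> c \<and> h s = t)))"
proof -
  have f0_ge_1: "1 \<le> f i 0" for i
    using assms(3)[of i] by (simp add: Bc_def)
  show ?thesis
  proof (intro conjI allI impI)
    fix t assume "h 1 \<le> t"
    then show "measure M {\<omega> \<in> space M. g (X \<omega>) \<ge> t}
                 \<le> real CARD('n) * (THE s. 0 < s \<and> s \<le> 1 \<and> h s = t)"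
      by (intro measure_g_ge_level_le[OF assms]) (use f0_ge_1 in auto)
  next
    fix c t assume c: "\<forall>i. f i 0 = c" and "g 0 \<le> t"
    have "(\<chi> i. finv (f i) c) = 0"
      using c finv_f[OF assms(3), of 0] by (simp add: vec_eq_iff)
    then have "h c = g 0"
      by (simp add: h_def)
    moreover have "1 \<le> c"
      by (metis c f0_ge_1)
    ultimately show "measure M {\<omega> \<in> space M. g (X \<omega>) \<ge> t}
                       \<le> real CARD('n) * (THE s. 0 < s \<and> s \<le> c \<and> h s = t)"
      by (intro measure_g_ge_level_le[OF assms]) (use c \<open>g 0 \<le> t\<close> in auto)
  qed
qed

end
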